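(* The two-sided ideal $(z')=z'U^+$ is completely prime, i.e. $U^+/(z')$ is a domain.
   Context: $\Bbbk$ is an algebraically closed field of characteristic zero and $q\in\Bbbk^\times$ is not a root of unity. $U^+$ is the $\Bbbk$-algebra generated by $e_1,e_2$ with relations (S1) $e_1^2e_2-(q^2+q^{-2})e_1e_2e_1+e_2e_1^2=0$ and (S2) $e_2^3e_1-(q^2+1+q^{-2})e_2^2e_1e_2+(q^2+1+q^{-2})e_2e_1e_2^2-e_1e_2^3=0$. Set $e_3=e_1e_2-q^2e_2e_1$, $w=e_2e_3-e_3e_2$, $z'=e_1w-q^{-4}we_1$ (a central element). *)

theory Defs
  imports "HOL-Library.Poly_Mapping" "HOL-Computational_Algebra.Polynomial"
begin

datatype letter = L1 | L2

datatype word = W "letter list"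

instantiation word :: monoid_add
begin
definition zero_word :: word where "zero_word = W []"
fun plus_word :: "word \<Rightarrow> word \<Rightarrow> word" where
  "plus_word (W a) (W b) = W (a @ b)"
instance
proof
  fix a b c :: word
  show "a + b + c = a + (b + c)" by (cases a; cases b; cases c) simp
  show "0 + a = a" by (cases a) (simp add: zero_word_def)
  show "a + 0 = a" by (cases a) (simp add: zero_word_def)
qed
end

text \<open>The free algebra k<x1,x2> over a commutative ring k: finitely supported
  functions from words to k, with the convolution (monoid algebra) product.\<close>
type_synonym 'k freealg = "word \<Rightarrow>\<^sub>0 'k"

definition scal :: "'k::comm_ring_1 \<Rightarrow> 'k freealg" where
  "scal c = Poly_Mapping.single 0 c"

definition gen1 :: "'k::comm_ring_1 freealg" where
  "gen1 = Poly_Mapping.single (W [L1]) 1"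

definition gen2 :: "'k::comm_ring_1 freealg" where
  "gen2 = Poly_Mapping.single (W [L2]) 1"

inductive_set two_sided_ideal :: "'k::comm_ring_1 freealg set \<Rightarrow> 'k freealg set"
  for S where
  gen: "s \<in> S \<Longrightarrow> s \<in> two_sided_ideal S"
| zero: "0 \<in> two_sided_ideal S"
| add: "a \<in> two_sided_ideal S \<Longrightarrow> b \<in> two_sided_ideal S \<Longrightarrow> a + b \<in> two_sided_ideal S"
| mult: "a \<in> two_sided_ideal S \<Longrightarrow> u * a * v \<in> two_sided_ideal S"

definition completely_prime :: "'k::comm_ring_1 freealg set \<Rightarrow> bool" where
  "completely_prime J \<longleftrightarrow> 1 \<notin> J \<and> (\<forall>a b. a * b \<in> J \<longrightarrow> a \<in> J \<or> b \<in> J)"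

definition rel_S1 :: "'k::field \<Rightarrow> 'k freealg" where
  "rel_S1 q = gen1 * gen1 * gen2 - scal (q^2 + inverse (q^2)) * gen1 * gen2 * gen1
             + gen2 * gen1 * gen1"

definition rel_S2 :: "'k::field \<Rightarrow> 'k freealg" where
  "rel_S2 q = gen2 * gen2 * gen2 * gen1
     - scal (q^2 + 1 + inverse (q^2)) * gen2 * gen2 * gen1 * gen2
     + scal (q^2 + 1 + inverse (q^2)) * gen2 * gen1 * gen2 * gen2
     - gen1 * gen2 * gen2 * gen2"

definition Uplus_ideal :: "'k::field \<Rightarrow> 'k freealg set" where
  "Uplus_ideal q = two_sided_ideal {rel_S1 q, rel_S2 q}"

definition e3 :: "'k::field \<Rightarrow> 'k freealg" where
  "e3 q = gen1 * gen2 - scal (q^2) * gen2 * gen1"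

definition w_el :: "'k::field \<Rightarrow> 'k freealg" where
  "w_el q = gen2 * e3 q - e3 q * gen2"

definition z' :: "'k::field \<Rightarrow> 'k freealg" where
  "z' q = gen1 * w_el q - scal (inverse (q^4)) * w_el q * gen1"

text \<open>Preimage in the free algebra of the ideal (z') of U^+.\<close>
definition z'_ideal :: "'k::field \<Rightarrow> 'k freealg set" where
  "z'_ideal q = two_sided_ideal {rel_S1 q, rel_S2 q, z' q}"

definition alg_closed_field :: "'k::field itself \<Rightarrow> bool" where
  "alg_closed_field _ \<longleftrightarrow> (\<forall>p :: 'k poly. degree p \<ge> 1 \<longrightarrow> (\<exists>x. poly p x = 0))"

end

(*
  Sending e1 to y and e2 to x + z defines a homomorphism qrep from the free algebra to the
  quantum affine space on x, y, z with yx = q^-2 xy, zx = q^2 xz and zy = q^-2 yz, a twisted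
  monoid algebra over N^3.  It kills S1, S2 and z'.  The quantum affine space is a domain,
  because lexicographically leading exponents add under multiplication.

  Conversely, modulo (z') the q-commutation relations among e1, e2, e3 and w rewrite every
  element as a linear combination of the normal monomials e2^a w^b e3^c e1^d with c <= 1.
  The image of such a monomial has a nonzero coefficient at x^(2b+c) y^(b+c+d) z^a, and no
  other normal monomial of e2-degree at most a has one there; so the images of the normal
  monomials are linearly independent.  Hence (z') is exactly the kernel of qrep, and the
  quotient embeds into a domain.
*)

theory Submission
  imports Defs "HOL-Library.Product_Plus" "HOL-Library.Product_Lexorder"
begin

section \<open>Twisted monoid algebras\<close>

definition pm_lift :: "('a \<Rightarrow> 'b::zero \<Rightarrow> 'c::comm_monoid_add) \<Rightarrow> ('a \<Rightarrow>\<^sub>0 'b) \<Rightarrow> 'c" where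
  "pm_lift g X = (\<Sum>a\<in>Poly_Mapping.keys X. g a (Poly_Mapping.lookup X a))"

lemma pm_lift_zero [simp]: "pm_lift g 0 = 0"
  by (simp add: pm_lift_def)

lemma pm_lift_single [simp]:
  assumes "g a 0 = 0"
  shows "pm_lift g (Poly_Mapping.single a c) = g a c"
  using assms by (cases "c = 0") (simp_all add: pm_lift_def)

lemma pm_lift_superset:
  assumes "finite A" "Poly_Mapping.keys X \<subseteq> A" "\<And>a. g a 0 = 0"
  shows "pm_lift g X = (\<Sum>a\<in>A. g a (Poly_Mapping.lookup X a))"
  unfolding pm_lift_def using assms
  by (intro sum.mono_neutral_left) (auto simp: in_keys_iff)

lemma pm_lift_add:
  fixes X Y :: "'a \<Rightarrow>\<^sub>0 'b::monoid_add"
  assumes "\<And>a. g a 0 = 0" "\<And>a c d. g a (c + d) = g a c + g a d"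
  shows "pm_lift g (X + Y) = pm_lift g X + pm_lift g Y"
proof -
  let ?A = "Poly_Mapping.keys X \<union> Poly_Mapping.keys Y"
  have "pm_lift g (X + Y) = (\<Sum>a\<in>?A. g a (Poly_Mapping.lookup (X + Y) a))"
    by (rule pm_lift_superset) (auto simp: keys_add assms)
  also have "\<dots> = (\<Sum>a\<in>?A. g a (Poly_Mapping.lookup X a)) + (\<Sum>a\<in>?A. g a (Poly_Mapping.lookup Y a))"
    by (simp add: lookup_add assms sum.distrib)
  also have "\<dots> = pm_lift g X + pm_lift g Y"
    by (subst (1 2) pm_lift_superset[where A = ?A]) (auto simp: assms)
  finally show ?thesis .
qed

lemma pm_lift_fun_add: "pm_lift (\<lambda>a c. g a c + h a c) X = pm_lift g X + pm_lift h X"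
  by (simp add: pm_lift_def sum.distrib)

lemma pm_lift_fun_zero [simp]: "pm_lift (\<lambda>a c. 0) X = 0"
  by (simp add: pm_lift_def)

lemma poly_mapping_induct [case_names zero single add]:
  fixes X :: "'a \<Rightarrow>\<^sub>0 'b::comm_monoid_add"
  assumes "P 0" "\<And>k c. P (Poly_Mapping.single k c)" "\<And>X Y. P X \<Longrightarrow> P Y \<Longrightarrow> P (X + Y)"
  shows "P X"
proof -
  have "X = (\<Sum>k\<in>Poly_Mapping.keys X. Poly_Mapping.single k (Poly_Mapping.lookup X k))"
    by (rule poly_mapping_eqI) (auto simp: lookup_sum lookup_single when_def in_keys_iff)
  moreover have "P (\<Sum>k\<in>K. Poly_Mapping.single k (Poly_Mapping.lookup X k))" if "finite K" for K
    using that by (induction K rule: finite_induct) (auto intro: assms)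
  ultimately show ?thesis by (metis finite_keys)
qed

locale bicharacter =
  fixes \<chi> :: "'m::cancel_comm_monoid_add \<Rightarrow> 'm \<Rightarrow> 'k::comm_ring_1"
  assumes add_left: "\<chi> (a + b) c = \<chi> a c * \<chi> b c"
    and add_right: "\<chi> a (b + c) = \<chi> a b * \<chi> a c"
    and zero_left [simp]: "\<chi> 0 b = 1"
    and zero_right [simp]: "\<chi> a 0 = 1"
begin

definition twisted_mult :: "('m \<Rightarrow>\<^sub>0 'k) \<Rightarrow> ('m \<Rightarrow>\<^sub>0 'k) \<Rightarrow> 'm \<Rightarrow>\<^sub>0 'k" (infixl \<open>\<star>\<close> 70) where
  "X \<star> Y = pm_lift (\<lambda>a c. pm_lift (\<lambda>b d. Poly_Mapping.single (a + b) (c * d * \<chi> a b)) Y) X"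

lemma single_twisted_mult_single [simp]:
  "Poly_Mapping.single a c \<star> Poly_Mapping.single b d = Poly_Mapping.single (a + b) (c * d * \<chi> a b)"
  by (simp add: twisted_mult_def)

lemma twisted_mult_zero_left [simp]: "0 \<star> Y = 0"
  by (simp add: twisted_mult_def)

lemma twisted_mult_zero_right [simp]: "X \<star> 0 = 0"
  by (simp add: twisted_mult_def)

lemma twisted_mult_add_left: "(X1 + X2) \<star> Y = X1 \<star> Y + X2 \<star> Y"
  unfolding twisted_mult_def
  by (rule pm_lift_add) (simp_all add: single_add distrib_right pm_lift_fun_add)

lemma twisted_mult_add_right: "X \<star> (Y1 + Y2) = X \<star> Y1 + X \<star> Y2"
  unfolding twisted_mult_def
  by (subst pm_lift_add) (simp_all add: single_add distrib_left distrib_right pm_lift_fun_add)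

lemma twisted_mult_diff_left: "(X1 - X2) \<star> Y = X1 \<star> Y - X2 \<star> Y"
  by (metis add_diff_cancel diff_add_cancel twisted_mult_add_left)

lemma twisted_mult_diff_right: "X \<star> (Y1 - Y2) = X \<star> Y1 - X \<star> Y2"
  by (metis add_diff_cancel diff_add_cancel twisted_mult_add_right)

lemmas twisted_mult_distribs =
  twisted_mult_add_left twisted_mult_add_right twisted_mult_diff_left twisted_mult_diff_right

lemma twisted_mult_assoc: "X \<star> Y \<star> Z = X \<star> (Y \<star> Z)"
proof (induction X rule: poly_mapping_induct)
  case (single a c)
  then show ?case
  proof (induction Y rule: poly_mapping_induct)
    case (single b d)
    then show ?case
      by (induction Z rule: poly_mapping_induct)
        (simp_all add: add_left add_right add.assoc mult_ac twisted_mult_add_right)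
  qed (simp_all add: twisted_mult_add_right twisted_mult_add_left)
qed (simp_all add: twisted_mult_add_left)

lemma twisted_mult_one_left [simp]: "1 \<star> X = X"
  by (induction X rule: poly_mapping_induct) (simp_all add: twisted_mult_add_right flip: single_one)

lemma twisted_mult_one_right [simp]: "X \<star> 1 = X"
  by (induction X rule: poly_mapping_induct) (simp_all add: twisted_mult_add_left flip: single_one)

lemma scalar_twisted_mult_commute:
  "Poly_Mapping.single 0 c \<star> X = X \<star> Poly_Mapping.single 0 c"
  by (induction X rule: poly_mapping_induct) (simp_all add: twisted_mult_distribs mult_ac)

lemma scalar_twisted_mult_twisted_mult:
  "(Poly_Mapping.single 0 c \<star> X) \<star> (Poly_Mapping.single 0 d \<star> Y) = Poly_Mapping.single 0 (c * d) \<star> (X \<star> Y)"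
proof -
  have "X \<star> (Poly_Mapping.single 0 d \<star> Y) = Poly_Mapping.single 0 d \<star> (X \<star> Y)"
    by (metis twisted_mult_assoc scalar_twisted_mult_commute)
  then show ?thesis
    by (simp add: twisted_mult_assoc flip: twisted_mult_assoc[of "Poly_Mapping.single 0 c"])
qed

lemma lookup_twisted_mult:
  "Poly_Mapping.lookup (X \<star> Y) e =
     (\<Sum>a\<in>Poly_Mapping.keys X. \<Sum>b\<in>Poly_Mapping.keys Y.
        if a + b = e then Poly_Mapping.lookup X a * Poly_Mapping.lookup Y b * \<chi> a b else 0)"
  by (simp add: twisted_mult_def pm_lift_def lookup_sum lookup_single when_def)

lemma lookup_twisted_mult_single:
  "Poly_Mapping.lookup (X \<star> Poly_Mapping.single m c) e =
     (\<Sum>p\<in>Poly_Mapping.keys X. if p + m = e then Poly_Mapping.lookup X p * c * \<chi> p m else 0)"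
  by (cases "c = 0") (simp_all add: lookup_twisted_mult cong: if_cong)

lemma keys_twisted_mult_single:
  "Poly_Mapping.keys (X \<star> Poly_Mapping.single m c) \<subseteq> (\<lambda>p. p + m) ` Poly_Mapping.keys X"
  by (force simp: in_keys_iff lookup_twisted_mult_single intro: sum.neutral)

lemma lookup_twisted_mult_single_shift [simp]:
  "Poly_Mapping.lookup (X \<star> Poly_Mapping.single m c) (p + m) = Poly_Mapping.lookup X p * c * \<chi> p m"
  by (auto simp: lookup_twisted_mult_single in_keys_iff if_distrib cong: if_cong)

lemma lookup_scalar_twisted_mult [simp]: "Poly_Mapping.lookup (Poly_Mapping.single 0 c \<star> X) p = c * Poly_Mapping.lookup X p"
  using lookup_twisted_mult_single_shift[of X 0 c p] by (simp add: scalar_twisted_mult_commute)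

end

locale ordered_bicharacter = bicharacter \<chi>
  for \<chi> :: "'m::{cancel_comm_monoid_add, linorder} \<Rightarrow> 'm \<Rightarrow> 'k::idom" +
  assumes nonzero: "\<chi> a b \<noteq> 0"
    and add_strict_right_mono: "a < b \<Longrightarrow> a + c < b + c"
begin

lemma add_eq_add_of_le:
  fixes a b m n :: 'm
  assumes "a \<le> m" "b \<le> n" "a + b = m + n"
  shows "a = m \<and> b = n"
proof (rule ccontr)
  assume "\<not> (a = m \<and> b = n)"
  then have "a < m \<or> b < n" using assms(1,2) by (auto simp: order.order_iff_strict)
  then have "a + b < m + n"
  proof
    assume "a < m"
    then have "a + b < m + b" by (rule add_strict_right_mono)
    also have "m + b \<le> m + n"
      using assms(2) add_strict_right_mono[of b n m] by (auto simp: add.commute order_le_less)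
    finally show ?thesis .
  next
    assume "b < n"
    then have "b + a < n + a" by (rule add_strict_right_mono)
    also have "n + a \<le> n + m"
      using assms(1) add_strict_right_mono[of a m n] by (auto simp: add.commute order_le_less)
    finally show ?thesis by (simp add: add.commute)
  qed
  with assms(3) show False by simp
qed

lemma lookup_twisted_mult_Max:
  assumes "X \<noteq> 0" "Y \<noteq> 0"
  defines "m \<equiv> Max (Poly_Mapping.keys X)" and "n \<equiv> Max (Poly_Mapping.keys Y)"
  shows "Poly_Mapping.lookup (X \<star> Y) (m + n) = Poly_Mapping.lookup X m * Poly_Mapping.lookup Y n * \<chi> m n"
proof -
  have m: "m \<in> Poly_Mapping.keys X" and n: "n \<in> Poly_Mapping.keys Y"
    using assms by (auto intro: Max_in)
  have sum_eq: "a + b = m + n \<longleftrightarrow> a = m \<and> b = n"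
    if "a \<in> Poly_Mapping.keys X" "b \<in> Poly_Mapping.keys Y" for a b
    using that add_eq_add_of_le[of a m b n] by (auto simp: m_def n_def)
  have "Poly_Mapping.lookup (X \<star> Y) (m + n) =
    (\<Sum>a\<in>Poly_Mapping.keys X. if a = m then Poly_Mapping.lookup X m * Poly_Mapping.lookup Y n * \<chi> m n else 0)"
    unfolding lookup_twisted_mult
  proof (intro sum.cong refl)
    fix a assume "a \<in> Poly_Mapping.keys X"
    then show "(\<Sum>b\<in>Poly_Mapping.keys Y. if a + b = m + n
        then Poly_Mapping.lookup X a * Poly_Mapping.lookup Y b * \<chi> a b else 0) =
      (if a = m then Poly_Mapping.lookup X m * Poly_Mapping.lookup Y n * \<chi> m n else 0)"
      using n by (simp add: sum_eq sum.delta' cong: sum.cong_simp)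
  qed
  with m show ?thesis by (simp add: sum.delta')
qed

lemma twisted_mult_eq_0_iff: "X \<star> Y = 0 \<longleftrightarrow> X = 0 \<or> Y = 0"
proof
  assume "X \<star> Y = 0"
  then show "X = 0 \<or> Y = 0"
    using lookup_twisted_mult_Max[of X Y] Max_in[of "Poly_Mapping.keys X"] Max_in[of "Poly_Mapping.keys Y"]
    by (auto simp: in_keys_iff nonzero)
qed auto

end

definition ideal_cong :: "'a::ab_group_add set \<Rightarrow> 'a \<Rightarrow> 'a \<Rightarrow> bool" where
  "ideal_cong J x y \<longleftrightarrow> x - y \<in> J"

(* A syntax translation rather than mixfix on ideal_cong, so that the right-hand side y is the
   last argument and "\<dots>" in calculations refers to it. *)
syntax "_ideal_cong" :: "'a \<Rightarrow> 'a \<Rightarrow> 'a set \<Rightarrow> bool" (\<open>(_ \<cong> _ '(mod _'))\<close> [51, 51, 0] 50)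
translations "x \<cong> y (mod J)" \<rightleftharpoons> "CONST ideal_cong J x y"

locale ring_ideal =
  fixes J :: "'a::ring_1 set"
  assumes zero_mem [simp]: "0 \<in> J"
    and add_mem: "a \<in> J \<Longrightarrow> b \<in> J \<Longrightarrow> a + b \<in> J"
    and mult_mem: "a \<in> J \<Longrightarrow> u * a * v \<in> J"
begin

lemma lmult_mem: "a \<in> J \<Longrightarrow> u * a \<in> J"
  using mult_mem[of a u 1] by simp

lemma rmult_mem: "a \<in> J \<Longrightarrow> a * v \<in> J"
  using mult_mem[of a 1 v] by simp

lemma diff_mem: "a \<in> J \<Longrightarrow> b \<in> J \<Longrightarrow> a - b \<in> J"
  using add_mem[of a "- 1 * b"] lmult_mem[of b "- 1"] by simp

lemma cong_refl [simp]: "x \<cong> x (mod J)"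
  by (simp add: ideal_cong_def)

lemma cong_trans [trans]: "x \<cong> y (mod J) \<Longrightarrow> y \<cong> z (mod J) \<Longrightarrow> x \<cong> z (mod J)"
  unfolding ideal_cong_def using add_mem by fastforce

lemma cong_add: "x \<cong> y (mod J) \<Longrightarrow> x' \<cong> y' (mod J) \<Longrightarrow> x + x' \<cong> y + y' (mod J)"
  unfolding ideal_cong_def using add_mem by (fastforce simp: algebra_simps)

lemma cong_lmult: "x \<cong> y (mod J) \<Longrightarrow> u * x \<cong> u * y (mod J)"
  unfolding ideal_cong_def using lmult_mem by (fastforce simp: algebra_simps)

end

lemma ring_ideal_two_sided_ideal: "ring_ideal (two_sided_ideal S)"
  by unfold_locales (auto intro: two_sided_ideal.intros)

lemmas lookup_simps = lookup_add lookup_minus lookup_single when_def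

lemma scal_one [simp]: "scal 1 = (1 :: 'k::comm_ring_1 freealg)"
  by (simp add: scal_def)

lemma scal_zero [simp]: "scal 0 = (0 :: 'k::comm_ring_1 freealg)"
  by (simp add: scal_def)

lemma scal_uminus: "scal (- c) = - (scal c :: 'k::comm_ring_1 freealg)"
  by (simp add: scal_def single_uminus)

lemma scal_minus_one_mult: "scal (- 1) * x = - (x :: 'k::comm_ring_1 freealg)"
  by (induction x rule: poly_mapping_induct)
    (simp_all add: scal_def mult_single single_uminus distrib_left)

lemma scal_mult_scal: "scal c * scal d = (scal (c * d) :: 'k::comm_ring_1 freealg)"
  by (simp add: scal_def mult_single)

lemma scal_mult_commute: "scal c * x = x * (scal c :: 'k::comm_ring_1 freealg)"
  by (induction x rule: poly_mapping_induct)
    (simp_all add: scal_def mult_single distrib_left distrib_right mult.commute)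

(* Not usable as an unrestricted simp rule: rewriting diverges when x is itself a scalar. *)
lemma scal_mult_left_commute: "x * (scal c * y) = scal c * (x * y :: 'k::comm_ring_1 freealg)"
  by (metis mult.assoc scal_mult_commute)

lemma scal_mult_scal_assoc: "scal c * (scal d * y) = scal (c * d) * (y :: 'k::comm_ring_1 freealg)"
  by (metis mult.assoc scal_mult_scal)

definition qcomm :: "'k::comm_ring_1 \<Rightarrow> 'k freealg \<Rightarrow> 'k freealg \<Rightarrow> 'k freealg" where
  "qcomm c x y = x * y - scal c * y * x"

lemmas freealg_expand = gen1_def gen2_def scal_def ring_distribs mult_single mult.assoc

lemma rel_S1_eq_qcomm:
  fixes q :: "'k::field"
  assumes "q \<noteq> 0"
  shows "rel_S1 q = qcomm (inverse (q ^ 2)) gen1 (e3 q)"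
  unfolding rel_S1_def e3_def qcomm_def using assms
  by (simp add: freealg_expand)
    (rule poly_mapping_eqI; auto simp: lookup_simps field_simps)

lemma rel_S2_eq_qcomm:
  fixes q :: "'k::field"
  assumes "q \<noteq> 0"
  shows "rel_S2 q = qcomm (inverse (q ^ 2)) (w_el q) gen2"
  unfolding rel_S2_def w_el_def e3_def qcomm_def using assms
  by (simp add: freealg_expand)
    (rule poly_mapping_eqI; auto simp: lookup_simps field_simps)

lemma qcomm_e3_w_eq:
  fixes q :: "'k::field"
  assumes "q \<noteq> 0"
  shows "qcomm (inverse (q ^ 2)) (e3 q) (w_el q) =
    scal (q ^ 2) * z' q * gen2 - scal (q ^ 2) * gen2 * z' q - scal (q ^ 2) * gen1 * rel_S2 q + rel_S2 q * gen1"
  unfolding rel_S2_def w_el_def e3_def z'_def qcomm_def using assms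
  by (simp add: freealg_expand)
    (rule poly_mapping_eqI; auto simp: lookup_simps field_simps)

lemma e3_square_eq:
  fixes q :: "'k::field"
  assumes "q \<noteq> 0"
  shows "scal (q ^ 2 - 1) * (e3 q * e3 q + scal (1 + inverse (q ^ 2)) * w_el q * gen1) =
    scal (q ^ 2) * (z' q + rel_S1 q * gen2 - scal (q ^ 2) * gen2 * rel_S1 q)"
  unfolding rel_S1_def w_el_def e3_def z'_def using assms
  by (simp add: freealg_expand)
    (rule poly_mapping_eqI; auto simp: lookup_simps field_simps)

lemma qcomm_power:
  assumes "ring_ideal J" "qcomm c x y \<in> J"
  shows "qcomm (c ^ n) x (y ^ n) \<in> J"
proof -
  interpret ring_ideal J by fact
  have step: "qcomm (c ^ Suc n) x (y ^ Suc n) = qcomm (c ^ n) x (y ^ n) * y + scal (c ^ n) * y ^ n * qcomm c x y"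
    for n
  proof -
    have "scal (c ^ n) * y ^ n * (scal c * y * x) = scal (c ^ n) * (y ^ n * scal c) * y * x"
      by (simp only: mult.assoc)
    also have "\<dots> = scal (c ^ n) * scal c * (y ^ n * y) * x"
      by (simp only: mult.assoc scal_mult_commute[of c "y ^ n", symmetric])
    also have "\<dots> = scal (c ^ Suc n) * y ^ Suc n * x"
      by (simp only: scal_mult_scal power_Suc2)
    finally show ?thesis
      by (simp add: qcomm_def ring_distribs mult.assoc power_Suc2 del: power_Suc)
  qed
  show ?thesis
  proof (induction n)
    case 0
    then show ?case by (simp add: qcomm_def)
  next
    case (Suc n)
    then show ?case unfolding step by (intro add_mem rmult_mem lmult_mem assms(2))
  qed
qed

lemma qcomm_mem_imp_cong:
  assumes "ring_ideal J" "qcomm c x y \<in> J"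
  shows "x * (y * z) \<cong> scal c * (y * (x * z)) (mod J)"
  using ring_ideal.rmult_mem[OF assms, of z]
  by (simp add: ideal_cong_def qcomm_def ring_distribs mult.assoc)

section \<open>The representation of U^+ on the quantum affine space\<close>

(* An exponent triple (i, j, k) stands for x^i y^j z^k and x^a x^b = qchar q a b x^(a+b);
   this encodes yx = q^-2 xy, zx = q^2 xz and zy = q^-2 yz. *)
type_synonym 'k qspace = "nat \<times> nat \<times> nat \<Rightarrow>\<^sub>0 'k"

definition qchar :: "'k::field \<Rightarrow> nat \<times> nat \<times> nat \<Rightarrow> nat \<times> nat \<times> nat \<Rightarrow> 'k" where
  "qchar q a b = q ^ (2 * snd (snd a) * fst b) *
     inverse q ^ (2 * fst (snd a) * fst b + 2 * snd (snd a) * fst (snd b))"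

lemma nat_triple_add_strict_right_mono:
  fixes a b c :: "nat \<times> nat \<times> nat"
  shows "a < b \<Longrightarrow> a + c < b + c"
  by (cases a; cases b; cases c) auto

lemma power2_neq_one_if_power4_neq_one:
  assumes "(q :: 'a::monoid_mult) ^ 4 \<noteq> 1"
  shows "q ^ 2 \<noteq> 1"
proof
  assume "q ^ 2 = 1"
  then have "(q ^ 2) ^ 2 = 1" by simp
  with assms show False by (simp flip: power_mult)
qed

lemma zero_nat_triple: "(0 :: nat \<times> nat \<times> nat) = (0, 0, 0)"
  by (simp add: zero_prod_def)

locale quantum_space =
  fixes q :: "'k::field"
  assumes q_nonzero: "q \<noteq> 0"

sublocale quantum_space \<subseteq> ordered_bicharacter "qchar q"
  by unfold_locales
    (auto simp: qchar_def power_add algebra_simps q_nonzero nat_triple_add_strict_right_mono)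

sublocale quantum_space \<subseteq> z'_ideal: ring_ideal "z'_ideal q"
  unfolding z'_ideal_def by (rule ring_ideal_two_sided_ideal)

context quantum_space
begin

notation twisted_mult (infixl \<open>\<star>\<close> 70)

fun letter_image :: "letter \<Rightarrow> 'k qspace" where
  "letter_image L1 = Poly_Mapping.single (0, 1, 0) 1"
| "letter_image L2 = Poly_Mapping.single (1, 0, 0) 1 + Poly_Mapping.single (0, 0, 1) 1"

fun word_image :: "letter list \<Rightarrow> 'k qspace" where
  "word_image [] = 1"
| "word_image (l # ls) = letter_image l \<star> word_image ls"

lemma word_image_append: "word_image (ls @ ms) = word_image ls \<star> word_image ms"
  by (induction ls) (simp_all add: twisted_mult_assoc)

definition qrep :: "'k freealg \<Rightarrow> 'k qspace" where
  "qrep f = pm_lift (\<lambda>w c. Poly_Mapping.single 0 c \<star> (case w of W ls \<Rightarrow> word_image ls)) f"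

lemma qrep_single: "qrep (Poly_Mapping.single (W ls) c) = Poly_Mapping.single 0 c \<star> word_image ls"
  by (simp add: qrep_def)

lemma qrep_add: "qrep (f + g) = qrep f + qrep g"
  unfolding qrep_def by (rule pm_lift_add) (simp_all add: single_add twisted_mult_add_left)

lemma qrep_zero [simp]: "qrep 0 = 0"
  by (simp add: qrep_def)

lemma qrep_diff: "qrep (f - g) = qrep f - qrep g"
  by (metis qrep_add add_diff_cancel diff_add_cancel)

lemma qrep_mult: "qrep (f * g) = qrep f \<star> qrep g"
proof (induction f rule: poly_mapping_induct)
  case (single v c)
  then show ?case
  proof (induction g rule: poly_mapping_induct)
    case (single w d)
    obtain ls ms where "v = W ls" "w = W ms" by (cases v; cases w)
    then show ?case
      by (simp add: mult_single qrep_single word_image_append scalar_twisted_mult_twisted_mult)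
  qed (simp_all add: qrep_add distrib_left twisted_mult_add_right)
qed (simp_all add: qrep_add distrib_right twisted_mult_add_left)

lemma qrep_scal: "qrep (scal c) = Poly_Mapping.single 0 c"
  by (simp add: scal_def zero_word_def qrep_single)

lemma qrep_one: "qrep 1 = 1"
  using qrep_scal[of 1] by (simp add: scal_def)

lemma qrep_gen1: "qrep gen1 = Poly_Mapping.single (0, 1, 0) 1"
  by (simp add: gen1_def qrep_single)

lemma qrep_gen2: "qrep gen2 = Poly_Mapping.single (1, 0, 0) 1 + Poly_Mapping.single (0, 0, 1) 1"
  by (simp add: gen2_def qrep_single)

lemmas qrep_simps = qrep_add qrep_diff qrep_mult qrep_scal qrep_gen1 qrep_gen2 twisted_mult_distribs

lemma qrep_e3: "qrep (e3 q) = Poly_Mapping.single (1, 1, 0) (inverse q ^ 2 - q ^ 2)"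
  unfolding e3_def using q_nonzero
  by (simp add: qrep_simps qchar_def)
    (rule poly_mapping_eqI; auto simp: lookup_simps field_simps eval_nat_numeral)

lemma qrep_w: "qrep (w_el q) = Poly_Mapping.single (2, 1, 0) ((inverse q ^ 2 - q ^ 2) * (1 - inverse q ^ 2))"
  unfolding w_el_def using q_nonzero
  by (simp add: qrep_simps qrep_e3 qchar_def)
    (rule poly_mapping_eqI; auto simp: lookup_simps field_simps eval_nat_numeral)

lemma qrep_z': "qrep (z' q) = 0"
  unfolding z'_def using q_nonzero
  by (simp add: qrep_simps qrep_w qchar_def)
    (rule poly_mapping_eqI; auto simp: lookup_simps field_simps eval_nat_numeral)

lemma qrep_rel_S1: "qrep (rel_S1 q) = 0"
  unfolding rel_S1_def using q_nonzero
  by (simp add: qrep_simps qchar_def)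
    (rule poly_mapping_eqI; auto simp: lookup_simps field_simps eval_nat_numeral)

lemma qrep_rel_S2: "qrep (rel_S2 q) = 0"
  unfolding rel_S2_def using q_nonzero
  by (simp add: qrep_simps qchar_def)
    (rule poly_mapping_eqI; auto simp: lookup_simps field_simps eval_nat_numeral)

lemma qrep_vanishes_on_z'_ideal: "x \<in> z'_ideal q \<Longrightarrow> qrep x = 0"
  unfolding z'_ideal_def
  by (induction rule: two_sided_ideal.induct) (auto simp: qrep_z' qrep_rel_S1 qrep_rel_S2 qrep_add qrep_mult)

lemma z'_ideal_generators:
  "rel_S1 q \<in> z'_ideal q" "rel_S2 q \<in> z'_ideal q" "z' q \<in> z'_ideal q"
  by (simp_all add: z'_ideal_def two_sided_ideal.gen)

lemma qcomm_gen1_e3_mem: "qcomm (inverse (q ^ 2)) gen1 (e3 q) \<in> z'_ideal q"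
  using z'_ideal_generators(1) by (simp add: rel_S1_eq_qcomm[OF q_nonzero])

lemma qcomm_w_gen2_mem: "qcomm (inverse (q ^ 2)) (w_el q) gen2 \<in> z'_ideal q"
  using z'_ideal_generators(2) by (simp add: rel_S2_eq_qcomm[OF q_nonzero])

lemma qcomm_gen1_w_mem: "qcomm (inverse (q ^ 4)) gen1 (w_el q) \<in> z'_ideal q"
  using z'_ideal_generators(3) by (simp add: z'_def qcomm_def)

lemma qcomm_e3_w_mem: "qcomm (inverse (q ^ 2)) (e3 q) (w_el q) \<in> z'_ideal q"
  unfolding qcomm_e3_w_eq[OF q_nonzero]
  by (intro z'_ideal.add_mem z'_ideal.diff_mem z'_ideal.lmult_mem z'_ideal.rmult_mem z'_ideal_generators)

lemma e3_square_mem: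
  assumes "q ^ 2 \<noteq> 1"
  shows "e3 q * e3 q + scal (1 + inverse (q ^ 2)) * w_el q * gen1 \<in> z'_ideal q"
proof -
  let ?x = "e3 q * e3 q + scal (1 + inverse (q ^ 2)) * w_el q * gen1"
  have "scal (q ^ 2 - 1) * ?x \<in> z'_ideal q"
    unfolding e3_square_eq[OF q_nonzero]
    by (intro z'_ideal.add_mem z'_ideal.diff_mem z'_ideal.lmult_mem z'_ideal.rmult_mem z'_ideal_generators)
  then have "scal (inverse (q ^ 2 - 1)) * (scal (q ^ 2 - 1) * ?x) \<in> z'_ideal q"
    by (rule z'_ideal.lmult_mem)
  with assms show ?thesis
    by (simp add: scal_mult_scal_assoc)
qed

end

section \<open>Normal forms modulo (z')\<close>

definition normal_monomial :: "'k::field \<Rightarrow> nat \<times> nat \<times> nat \<times> nat \<Rightarrow> 'k freealg" where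
  "normal_monomial q = (\<lambda>(a, b, c, d). gen2 ^ a * (w_el q ^ b * (e3 q ^ c * gen1 ^ d)))"

definition normal_comb :: "'k::field \<Rightarrow> (nat \<times> nat \<times> nat \<times> nat \<Rightarrow>\<^sub>0 'k) \<Rightarrow> 'k freealg" where
  "normal_comb q C = pm_lift (\<lambda>m c. scal c * normal_monomial q m) C"

definition normal_support :: "(nat \<times> nat \<times> nat \<times> nat \<Rightarrow>\<^sub>0 'k::zero) \<Rightarrow> bool" where
  "normal_support C \<longleftrightarrow> (\<forall>(a, b, c, d) \<in> Poly_Mapping.keys C. c \<le> 1)"

definition normal_exponent :: "nat \<times> nat \<times> nat \<times> nat \<Rightarrow> nat \<times> nat \<times> nat" where
  "normal_exponent = (\<lambda>(a, b, c, d). (2 * b + c, b + c + d, a))"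

definition has_normal_form :: "'k::field \<Rightarrow> 'k freealg \<Rightarrow> bool" where
  "has_normal_form q x \<longleftrightarrow> (\<exists>C. normal_support C \<and> x \<cong> normal_comb q C (mod z'_ideal q))"

context quantum_space
begin

lemma has_normal_form_cong: "x \<cong> y (mod z'_ideal q) \<Longrightarrow> has_normal_form q y \<Longrightarrow> has_normal_form q x"
  unfolding has_normal_form_def by (blast intro: z'_ideal.cong_trans)

lemma has_normal_form_zero: "has_normal_form q 0"
  unfolding has_normal_form_def by (rule exI[of _ 0]) (simp add: normal_support_def normal_comb_def)

lemma has_normal_form_scal_normal_monomial:
  "c \<le> 1 \<Longrightarrow> has_normal_form q (scal k * normal_monomial q (a, b, c, d))"
  unfolding has_normal_form_def
  by (rule exI[of _ "Poly_Mapping.single (a, b, c, d) k"]) (simp add: normal_support_def normal_comb_def)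

lemma has_normal_form_normal_monomial: "c \<le> 1 \<Longrightarrow> has_normal_form q (normal_monomial q (a, b, c, d))"
  using has_normal_form_scal_normal_monomial[of c 1] by simp

lemma has_normal_form_add:
  assumes "has_normal_form q x" "has_normal_form q y"
  shows "has_normal_form q (x + y)"
proof -
  obtain C D where "normal_support C" "x \<cong> normal_comb q C (mod z'_ideal q)"
    "normal_support D" "y \<cong> normal_comb q D (mod z'_ideal q)"
    using assms unfolding has_normal_form_def by blast
  moreover have "normal_comb q (C + D) = normal_comb q C + normal_comb q D"
    unfolding normal_comb_def by (rule pm_lift_add) (simp_all add: scal_def single_add distrib_right)
  moreover have "normal_support C \<Longrightarrow> normal_support D \<Longrightarrow> normal_support (C + D)"
    using keys_add[of C D] by (auto simp: normal_support_def)
  ultimately show ?thesis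
    unfolding has_normal_form_def by (metis z'_ideal.cong_add)
qed

lemma has_normal_form_sum:
  "finite A \<Longrightarrow> (\<And>i. i \<in> A \<Longrightarrow> has_normal_form q (f i)) \<Longrightarrow> has_normal_form q (\<Sum>i\<in>A. f i)"
  by (induction A rule: finite_induct) (auto intro: has_normal_form_zero has_normal_form_add)

lemma has_normal_form_lmult:
  assumes "\<And>a b c d k. c \<le> 1 \<Longrightarrow> has_normal_form q (u * (scal k * normal_monomial q (a, b, c, d)))"
    and "has_normal_form q x"
  shows "has_normal_form q (u * x)"
proof -
  obtain C where C: "normal_support C" "x \<cong> normal_comb q C (mod z'_ideal q)"
    using assms(2) unfolding has_normal_form_def by blast
  have "u * normal_comb q C =
      (\<Sum>m\<in>Poly_Mapping.keys C. u * (scal (Poly_Mapping.lookup C m) * normal_monomial q m))"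
    by (simp add: normal_comb_def pm_lift_def sum_distrib_left)
  also have "has_normal_form q \<dots>"
  proof (intro has_normal_form_sum finite_keys)
    fix m assume "m \<in> Poly_Mapping.keys C"
    moreover obtain a b c d where "m = (a, b, c, d)" by (cases m)
    ultimately show "has_normal_form q (u * (scal (Poly_Mapping.lookup C m) * normal_monomial q m))"
      using C(1) assms(1) by (auto simp: normal_support_def)
  qed
  finally show ?thesis
    using C(2) by (blast intro: has_normal_form_cong z'_ideal.cong_lmult)
qed

lemma has_normal_form_scal: "has_normal_form q x \<Longrightarrow> has_normal_form q (scal k * x)"
  by (rule has_normal_form_lmult) (simp_all add: scal_mult_scal_assoc has_normal_form_scal_normal_monomial)

lemma has_normal_form_diff:
  "has_normal_form q x \<Longrightarrow> has_normal_form q y \<Longrightarrow> has_normal_form q (x - y)"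
  using has_normal_form_add[of x "scal (- 1) * y"] has_normal_form_scal[of y "- 1"]
  by (simp add: scal_minus_one_mult)

lemma normal_monomial_Suc: "normal_monomial q (Suc a, b, c, d) = gen2 * normal_monomial q (a, b, c, d)"
  by (simp add: normal_monomial_def mult.assoc)

lemma has_normal_form_gen2: "has_normal_form q x \<Longrightarrow> has_normal_form q (gen2 * x)"
proof (rule has_normal_form_lmult)
  fix a b c d k assume "(c::nat) \<le> 1"
  then show "has_normal_form q (gen2 * (scal k * normal_monomial q (a, b, c, d)))"
    using has_normal_form_scal_normal_monomial[of c k "Suc a" b d]
    by (simp add: normal_monomial_Suc scal_mult_left_commute[of gen2])
qed

lemma gen1_mult_w_e3_gen1_cong:
  "gen1 * (w_el q ^ b * (e3 q ^ c * gen1 ^ d)) \<cong>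
    scal (inverse (q ^ 4) ^ b * inverse (q ^ 2) ^ c) * (w_el q ^ b * (e3 q ^ c * gen1 ^ Suc d)) (mod z'_ideal q)"
proof -
  have "gen1 * (w_el q ^ b * (e3 q ^ c * gen1 ^ d)) \<cong>
      scal (inverse (q ^ 4) ^ b) * (w_el q ^ b * (gen1 * (e3 q ^ c * gen1 ^ d))) (mod z'_ideal q)"
    by (intro qcomm_mem_imp_cong qcomm_power qcomm_gen1_w_mem z'_ideal.ring_ideal_axioms)
  also have "\<dots> \<cong> scal (inverse (q ^ 4) ^ b) *
      (w_el q ^ b * (scal (inverse (q ^ 2) ^ c) * (e3 q ^ c * (gen1 * gen1 ^ d)))) (mod z'_ideal q)"
    by (intro z'_ideal.cong_lmult qcomm_mem_imp_cong qcomm_power qcomm_gen1_e3_mem z'_ideal.ring_ideal_axioms)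
  also have "\<dots> = scal (inverse (q ^ 4) ^ b * inverse (q ^ 2) ^ c) * (w_el q ^ b * (e3 q ^ c * gen1 ^ Suc d))"
    by (simp add: scal_mult_left_commute[of "w_el q ^ b"] scal_mult_scal_assoc)
  finally show ?thesis .
qed

lemma e3_mult_w_gen1_cong:
  "e3 q * (w_el q ^ b * gen1 ^ d) \<cong> scal (inverse (q ^ 2) ^ b) * (w_el q ^ b * (e3 q * gen1 ^ d)) (mod z'_ideal q)"
  by (intro qcomm_mem_imp_cong qcomm_power qcomm_e3_w_mem z'_ideal.ring_ideal_axioms)

lemma e3_mult_w_e3_gen1_cong:
  assumes "q ^ 2 \<noteq> 1"
  shows "e3 q * (w_el q ^ b * (e3 q * gen1 ^ d)) \<cong>
    scal (- (inverse (q ^ 2) ^ b * (1 + inverse (q ^ 2)))) * (w_el q ^ Suc b * gen1 ^ Suc d) (mod z'_ideal q)"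
proof -
  have "e3 q * (w_el q ^ b * (e3 q * gen1 ^ d)) \<cong>
      scal (inverse (q ^ 2) ^ b) * (w_el q ^ b * (e3 q * (e3 q * gen1 ^ d))) (mod z'_ideal q)"
    by (intro qcomm_mem_imp_cong qcomm_power qcomm_e3_w_mem z'_ideal.ring_ideal_axioms)
  also have "\<dots> \<cong> scal (inverse (q ^ 2) ^ b) *
      (w_el q ^ b * - (scal (1 + inverse (q ^ 2)) * (w_el q * (gen1 * gen1 ^ d)))) (mod z'_ideal q)"
    using z'_ideal.rmult_mem[OF e3_square_mem[OF assms], of "gen1 ^ d"]
    by (intro z'_ideal.cong_lmult) (simp add: ideal_cong_def ring_distribs mult.assoc)
  also have "\<dots> = scal (- (inverse (q ^ 2) ^ b * (1 + inverse (q ^ 2)))) * (w_el q ^ Suc b * gen1 ^ Suc d)"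
    using power_commutes[of "w_el q" b]
    by (simp add: scal_uminus scal_mult_left_commute[of "w_el q ^ b"] scal_mult_scal_assoc mult.assoc
        flip: mult.assoc[of "w_el q ^ b" "w_el q"])
  finally show ?thesis .
qed

lemma has_normal_form_mult_normal_monomial_0:
  assumes "q ^ 2 \<noteq> 1" "c \<le> 1"
  shows "has_normal_form q (gen1 * normal_monomial q (0, b, c, d)) \<and>
    has_normal_form q (e3 q * normal_monomial q (0, b, c, d)) \<and>
    has_normal_form q (w_el q * normal_monomial q (0, b, c, d))"
proof -
  have "has_normal_form q (gen1 * normal_monomial q (0, b, c, d))"
    using has_normal_form_cong[OF gen1_mult_w_e3_gen1_cong, of b c d]
      has_normal_form_scal_normal_monomial[OF assms(2), of _ 0 b "Suc d"]
    by (simp add: normal_monomial_def)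
  moreover have "has_normal_form q (e3 q * normal_monomial q (0, b, c, d))"
  proof (cases "c = 0")
    case True
    then show ?thesis
      using has_normal_form_cong[OF e3_mult_w_gen1_cong, of b d]
        has_normal_form_scal_normal_monomial[of 1 _ 0 b d]
      by (simp add: normal_monomial_def)
  next
    case False
    with assms(2) have "c = 1" by simp
    then show ?thesis
      using has_normal_form_cong[OF e3_mult_w_e3_gen1_cong[OF assms(1)], of b d]
        has_normal_form_scal_normal_monomial[of 0 _ 0 "Suc b" "Suc d"]
      by (simp add: normal_monomial_def)
  qed
  moreover have "w_el q * normal_monomial q (0, b, c, d) = normal_monomial q (0, Suc b, c, d)"
    by (simp add: normal_monomial_def mult.assoc)
  ultimately show ?thesis
    using has_normal_form_normal_monomial[OF assms(2)] by simp
qed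

lemma has_normal_form_mult_normal_monomial:
  assumes "q ^ 2 \<noteq> 1" "c \<le> 1"
  shows "has_normal_form q (gen1 * normal_monomial q (a, b, c, d)) \<and>
    has_normal_form q (e3 q * normal_monomial q (a, b, c, d)) \<and>
    has_normal_form q (w_el q * normal_monomial q (a, b, c, d))"
proof (induction a)
  case 0
  with assms show ?case
    by (rule has_normal_form_mult_normal_monomial_0)
next
  case (Suc a)
  let ?m = "normal_monomial q (a, b, c, d)"
  have "gen1 * (gen2 * ?m) = e3 q * ?m + scal (q ^ 2) * (gen2 * (gen1 * ?m))"
    by (simp add: e3_def ring_distribs mult.assoc)
  moreover have "e3 q * (gen2 * ?m) = gen2 * (e3 q * ?m) - w_el q * ?m"
    by (simp add: w_el_def ring_distribs mult.assoc)
  moreover have "w_el q * (gen2 * ?m) \<cong> scal (inverse (q ^ 2)) * (gen2 * (w_el q * ?m)) (mod z'_ideal q)"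
    by (intro qcomm_mem_imp_cong qcomm_w_gen2_mem z'_ideal.ring_ideal_axioms)
  ultimately show ?case
    using Suc
    by (auto simp: normal_monomial_Suc
        intro: has_normal_form_add has_normal_form_diff has_normal_form_scal has_normal_form_gen2
          has_normal_form_cong)
qed

lemma has_normal_form_gen1:
  assumes "q ^ 2 \<noteq> 1" "has_normal_form q x"
  shows "has_normal_form q (gen1 * x)"
  using assms(2)
proof (rule has_normal_form_lmult[rotated])
  fix a b c d k assume "(c::nat) \<le> 1"
  with assms(1) show "has_normal_form q (gen1 * (scal k * normal_monomial q (a, b, c, d)))"
    using has_normal_form_mult_normal_monomial
    by (simp add: scal_mult_left_commute[of gen1] has_normal_form_scal)
qed

lemma has_normal_form_all:
  assumes "q ^ 2 \<noteq> 1"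
  shows "has_normal_form q x"
proof -
  have word: "has_normal_form q (Poly_Mapping.single (W ls) 1)" for ls
  proof (induction ls)
    case Nil
    then show ?case
      using has_normal_form_normal_monomial[of 0 0 0 0] by (simp add: normal_monomial_def flip: zero_word_def)
  next
    case (Cons l ls)
    have "Poly_Mapping.single (W (l # ls)) 1 = Poly_Mapping.single (W [l]) 1 * Poly_Mapping.single (W ls) (1 :: 'k)"
      by (simp add: mult_single)
    with Cons show ?case
      by (cases l) (simp_all add: has_normal_form_gen1[OF assms] has_normal_form_gen2 flip: gen1_def gen2_def)
  qed
  show ?thesis
  proof (induction x rule: poly_mapping_induct)
    case (single w c)
    moreover obtain ls where "w = W ls" by (cases w)
    ultimately show ?case
      using has_normal_form_scal[OF word[of ls], of c] by (simp add: scal_def mult_single)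
  qed (simp_all add: has_normal_form_zero has_normal_form_add)
qed

section \<open>Linear independence of the images of normal monomials\<close>

lemma qrep_sum: "qrep (\<Sum>i\<in>A. f i) = (\<Sum>i\<in>A. qrep (f i))"
  by (induction A rule: infinite_finite_induct) (simp_all add: qrep_add)

lemma qrep_power_single:
  assumes "qrep x = Poly_Mapping.single (i, j, k) \<kappa>" "\<kappa> \<noteq> 0"
  shows "\<exists>\<kappa>'. \<kappa>' \<noteq> 0 \<and> qrep (x ^ n) = Poly_Mapping.single (n * i, n * j, n * k) \<kappa>'"
proof (induction n)
  case 0
  show ?case by (intro exI[of _ 1]) (simp add: qrep_one flip: zero_nat_triple)
next
  case (Suc n)
  then obtain \<kappa>' where "\<kappa>' \<noteq> 0" "qrep (x ^ n) = Poly_Mapping.single (n * i, n * j, n * k) \<kappa>'"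
    by blast
  with assms show ?case
    by (intro exI[of _ "\<kappa> * \<kappa>' * qchar q (i, j, k) (n * i, n * j, n * k)"]) (simp add: qrep_mult nonzero)
qed

lemma qrep_w_e3_gen1:
  assumes "q ^ 4 \<noteq> 1"
  shows "\<exists>\<kappa>. \<kappa> \<noteq> 0 \<and>
    qrep (w_el q ^ b * (e3 q ^ c * gen1 ^ d)) = Poly_Mapping.single (2 * b + c, b + c + d, 0) \<kappa>"
proof -
  have "inverse q ^ 2 - q ^ 2 \<noteq> 0" "1 - inverse q ^ 2 \<noteq> 0"
    using assms power2_neq_one_if_power4_neq_one[OF assms] q_nonzero
    by (auto simp: field_simps power_inverse simp flip: power_add)
  then obtain \<kappa>1 \<kappa>2 \<kappa>3 where
    "\<kappa>1 \<noteq> 0" "qrep (w_el q ^ b) = Poly_Mapping.single (b * 2, b * 1, b * 0) \<kappa>1"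
    "\<kappa>2 \<noteq> 0" "qrep (e3 q ^ c) = Poly_Mapping.single (c * 1, c * 1, c * 0) \<kappa>2"
    "\<kappa>3 \<noteq> 0" "qrep (gen1 ^ d) = Poly_Mapping.single (d * 0, d * 1, d * 0) \<kappa>3"
    using qrep_power_single[OF qrep_w] qrep_power_single[OF qrep_e3] qrep_power_single[OF qrep_gen1]
    by (metis one_neq_zero no_zero_divisors)
  then show ?thesis
    by (simp add: qrep_mult nonzero algebra_simps)
      (metis (no_types) mult_eq_0_iff nonzero)
qed

lemma keys_qrep_gen2_power: "Poly_Mapping.keys (qrep (gen2 ^ a)) \<subseteq> {(x, 0, z) | x z. x + z = a}"
proof (induction a)
  case 0
  then show ?case by (simp add: qrep_one zero_nat_triple)
next
  case (Suc a)
  have "qrep (gen2 ^ Suc a) =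
      qrep (gen2 ^ a) \<star> Poly_Mapping.single (1, 0, 0) 1 + qrep (gen2 ^ a) \<star> Poly_Mapping.single (0, 0, 1) 1"
    by (simp add: qrep_mult qrep_gen2 twisted_mult_add_right power_Suc2 del: power_Suc)
  then show ?case
    using Suc keys_add keys_twisted_mult_single by fastforce
qed

lemma lookup_qrep_gen2_power: "Poly_Mapping.lookup (qrep (gen2 ^ a)) (0, 0, a) = 1"
proof (induction a)
  case 0
  then show ?case by (simp add: qrep_one flip: zero_nat_triple)
next
  case (Suc a)
  have "(0, 0, Suc a) \<notin> Poly_Mapping.keys (qrep (gen2 ^ a) \<star> Poly_Mapping.single (1, 0, 0) 1)"
    using keys_twisted_mult_single by fastforce
  moreover have "Poly_Mapping.lookup (qrep (gen2 ^ a) \<star> Poly_Mapping.single (0, 0, 1) 1) (0, 0, Suc a) = 1"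
    using Suc lookup_twisted_mult_single_shift[of "qrep (gen2 ^ a)" "(0, 0, 1)" 1 "(0, 0, a)"]
    by (simp add: qchar_def)
  ultimately show ?case
    by (simp add: qrep_mult qrep_gen2 twisted_mult_add_right lookup_add in_keys_iff power_Suc2
        del: power_Suc)
qed

lemma lookup_qrep_normal_monomial:
  assumes "q ^ 4 \<noteq> 1" "c \<le> 1" "c0 \<le> 1" "a \<le> a0"
  shows "Poly_Mapping.lookup (qrep (normal_monomial q (a, b, c, d))) (normal_exponent (a0, b0, c0, d0)) \<noteq> 0
    \<longleftrightarrow> (a, b, c, d) = (a0, b0, c0, d0)"
proof -
  define t where "t = (2 * b + c, b + c + d, 0 :: nat)"
  obtain \<kappa> where "\<kappa> \<noteq> 0" and tail: "qrep (w_el q ^ b * (e3 q ^ c * gen1 ^ d)) = Poly_Mapping.single t \<kappa>"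
    using qrep_w_e3_gen1[OF assms(1)] unfolding t_def by blast
  have image: "qrep (normal_monomial q (a, b, c, d)) = qrep (gen2 ^ a) \<star> Poly_Mapping.single t \<kappa>"
    by (simp add: normal_monomial_def qrep_mult[of "gen2 ^ a"] tail)
  show ?thesis
  proof
    assume "Poly_Mapping.lookup (qrep (normal_monomial q (a, b, c, d))) (normal_exponent (a0, b0, c0, d0)) \<noteq> 0"
    then have "normal_exponent (a0, b0, c0, d0) \<in> Poly_Mapping.keys (qrep (gen2 ^ a) \<star> Poly_Mapping.single t \<kappa>)"
      by (simp add: image in_keys_iff)
    then have "normal_exponent (a0, b0, c0, d0) \<in> (\<lambda>p. p + t) ` Poly_Mapping.keys (qrep (gen2 ^ a))"
      using keys_twisted_mult_single by blast
    then obtain x z where "x + z = a" "(x + 2 * b + c, b + c + d, z) = (2 * b0 + c0, b0 + c0 + d0, a0)"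
      using keys_qrep_gen2_power by (fastforce simp: t_def normal_exponent_def)
    with assms(4) have "a = a0" "2 * b + c = 2 * b0 + c0" "b + c + d = b0 + c0 + d0"
      by auto
    moreover from this(2) assms(2,3) have "b = b0 \<and> c = c0"
      by presburger
    ultimately show "(a, b, c, d) = (a0, b0, c0, d0)"
      by simp
  next
    assume "(a, b, c, d) = (a0, b0, c0, d0)"
    then have "normal_exponent (a0, b0, c0, d0) = (0, 0, a) + t"
      by (simp add: normal_exponent_def t_def)
    with \<open>\<kappa> \<noteq> 0\<close>
    show "Poly_Mapping.lookup (qrep (normal_monomial q (a, b, c, d))) (normal_exponent (a0, b0, c0, d0)) \<noteq> 0"
      by (simp add: image lookup_qrep_gen2_power nonzero)
  qed
qed

lemma lookup_qrep_normal_comb: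
  "Poly_Mapping.lookup (qrep (normal_comb q C)) e =
    (\<Sum>m\<in>Poly_Mapping.keys C. Poly_Mapping.lookup C m * Poly_Mapping.lookup (qrep (normal_monomial q m)) e)"
  by (simp add: normal_comb_def pm_lift_def qrep_sum qrep_mult qrep_scal lookup_sum)

lemma qrep_normal_comb_eq_0D:
  assumes "q ^ 4 \<noteq> 1" "normal_support C" "qrep (normal_comb q C) = 0"
  shows "C = 0"
proof (rule ccontr)
  assume "C \<noteq> 0"
  define a0 where "a0 = Max (fst ` Poly_Mapping.keys C)"
  have "a0 \<in> fst ` Poly_Mapping.keys C"
    using \<open>C \<noteq> 0\<close> unfolding a0_def by (intro Max_in) auto
  then obtain b0 c0 d0 where m0: "(a0, b0, c0, d0) \<in> Poly_Mapping.keys C" by force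
  have normal: "c \<le> 1" if "(a, b, c, d) \<in> Poly_Mapping.keys C" for a b c d
    using assms(2) that unfolding normal_support_def by fastforce
  let ?e0 = "normal_exponent (a0, b0, c0, d0)"
  have "(\<Sum>m\<in>Poly_Mapping.keys C - {(a0, b0, c0, d0)}.
      Poly_Mapping.lookup C m * Poly_Mapping.lookup (qrep (normal_monomial q m)) ?e0) = 0"
  proof (rule sum.neutral, rule ballI)
    fix m assume that: "m \<in> Poly_Mapping.keys C - {(a0, b0, c0, d0)}"
    obtain a b c d where m: "m = (a, b, c, d)" by (cases m)
    with that have "a \<le> a0"
      unfolding a0_def by (intro Max_ge) force+
    with that show "Poly_Mapping.lookup C m * Poly_Mapping.lookup (qrep (normal_monomial q m)) ?e0 = 0"
      using lookup_qrep_normal_monomial[OF assms(1) normal normal[OF m0]] m by auto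
  qed
  then have "Poly_Mapping.lookup (qrep (normal_comb q C)) ?e0 =
      Poly_Mapping.lookup C (a0, b0, c0, d0) * Poly_Mapping.lookup (qrep (normal_monomial q (a0, b0, c0, d0))) ?e0"
    unfolding lookup_qrep_normal_comb sum.remove[OF finite_keys m0] by simp
  also have "\<dots> \<noteq> 0"
    using m0 lookup_qrep_normal_monomial[OF assms(1) normal[OF m0] normal[OF m0] order_refl]
    by (simp add: in_keys_iff)
  finally show False
    using assms(3) by simp
qed

theorem z'_ideal_eq_kernel:
  assumes "q ^ 4 \<noteq> 1"
  shows "x \<in> z'_ideal q \<longleftrightarrow> qrep x = 0"
proof
  assume "qrep x = 0"
  obtain C where C: "normal_support C" "x \<cong> normal_comb q C (mod z'_ideal q)"
    using has_normal_form_all[OF power2_neq_one_if_power4_neq_one[OF assms]]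
    unfolding has_normal_form_def by blast
  then have "qrep (normal_comb q C) = 0"
    using \<open>qrep x = 0\<close> qrep_vanishes_on_z'_ideal[of "x - normal_comb q C"]
    by (simp add: ideal_cong_def qrep_diff)
  with assms C(1) have "C = 0"
    by (rule qrep_normal_comb_eq_0D)
  with C(2) show "x \<in> z'_ideal q"
    by (simp add: ideal_cong_def normal_comb_def)
qed (rule qrep_vanishes_on_z'_ideal)

end

lemma completely_prime_if_kernel:
  fixes f :: "'k::comm_ring_1 freealg \<Rightarrow> 'b::zero"
  assumes "\<And>x. x \<in> J \<longleftrightarrow> f x = 0"
    and "\<And>x y. f (x * y) = g (f x) (f y)"
    and "\<And>u v. g u v = 0 \<Longrightarrow> u = 0 \<or> v = 0"
    and "f 1 \<noteq> 0"
  shows "completely_prime J"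
  unfolding completely_prime_def
proof (intro conjI allI impI)
  show "1 \<notin> J"
    using assms(1,4) by blast
  fix x y assume "x * y \<in> J"
  then have "g (f x) (f y) = 0"
    using assms(1,2) by simp
  then show "x \<in> J \<or> y \<in> J"
    using assms(1,3) by blast
qed

theorem mainTheorem13:
  fixes q :: "'k::field_char_0"
  assumes "alg_closed_field TYPE('k)"
    and "q \<noteq> 0"
    and "\<forall>n::nat. n > 0 \<longrightarrow> q ^ n \<noteq> 1"
  shows "completely_prime (z'_ideal q)"
proof -
  interpret quantum_space q
    using assms(2) by unfold_locales
  have "q ^ 4 \<noteq> 1"
    using assms(3) by simp
  show ?thesis
  proof (rule completely_prime_if_kernel)
    show "x \<in> z'_ideal q \<longleftrightarrow> qrep x = 0" for x
      using \<open>q ^ 4 \<noteq> 1\<close> by (rule z'_ideal_eq_kernel)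
    show "qrep (x * y) = qrep x \<star> qrep y" for x y
      by (rule qrep_mult)
    show "u \<star> v = 0 \<Longrightarrow> u = 0 \<or> v = 0" for u v
      by (simp add: twisted_mult_eq_0_iff)
    show "qrep 1 \<noteq> 0"
      by (simp add: qrep_one)
  qed
qed

end
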